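(* Let $p$ be a prime and $B\subset\mathrm{GL}_2(\mathbb{F}_p)$ the subgroup of upper triangular matrices. Let $H\subset B$ be a subgroup of order divisible by $p$ of the form $H=D\cdot U$, where $D\subset B$ is a subgroup of diagonal matrices and $U$ is the cyclic group generated by $\begin{pmatrix}1&1\\0&1\end{pmatrix}$ (which is normal in $H$). Let $\pi:H\to H/U\simeq D$ be the quotient map. Let $\phi$ be an automorphism of $H$ such that $\pi(x)=\pi(\phi(x))$ for all $x\in H$. Then $\phi$ is given by conjugation in $B$: there is $A\in B$ such that $\phi(x)=AxA^{-1}$ for all $x\in H$. *)

theory Defs
  imports "HOL-Analysis.Analysis" "HOL-Algebra.Algebra"
begin

text \<open>GL_2 over a field k, as a HOL-Algebra monoid (it is a group).
  Matrices are 'k^2^2; entry (i,j) is A$i$j, indices 1 and 2.\<close>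
definition GL2 :: "('k::field^2^2) monoid" where
  "GL2 = \<lparr>carrier = {A. invertible A}, mult = (\<lambda>A B. A ** B), one = mat 1\<rparr>"

definition Borel :: "('k::field^2^2) set" where
  "Borel = {A. A$2$1 = 0 \<and> A$1$1 \<noteq> 0 \<and> A$2$2 \<noteq> 0}"

definition Diag :: "('k::field^2^2) set" where
  "Diag = {A. A$2$1 = 0 \<and> A$1$2 = 0 \<and> A$1$1 \<noteq> 0 \<and> A$2$2 \<noteq> 0}"

definition unip :: "'k::field^2^2" where
  "unip = (\<chi> i j. if i = 1 \<and> j = 2 then 1 else if i = j then 1 else 0)"

definition Ugrp :: "('k::field^2^2) set" where
  "Ugrp = generate GL2 {unip}"

definition DU :: "('k::field^2^2) set \<Rightarrow> ('k^2^2) set" where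
  "DU D = {d ** u | d u. d \<in> D \<and> u \<in> Ugrp}"

end

theory Submission
  imports Defs "HOL-Number_Theory.Residues"
begin

text \<open>Since \<open>\<phi>\<close> preserves the cosets of \<open>U\<close>, it maps \<open>(1 1; 0 1)\<close> to some \<open>(1 a; 0 1)\<close>,
  with \<open>a \<noteq> 0\<close> by injectivity, and a diagonal \<open>d\<close> to \<open>(d\<^sub>1\<^sub>1 b(d); 0 d\<^sub>2\<^sub>2)\<close>.
  Multiplicativity makes \<open>b\<close> a twisted derivation on \<open>D\<close>: \<open>b(d e) = d\<^sub>1\<^sub>1 b(e) + b(d) e\<^sub>2\<^sub>2\<close>.
  Comparing \<open>b(d\<^sub>0 d)\<close> with \<open>b(d d\<^sub>0)\<close> for a non-scalar \<open>d\<^sub>0 \<in> D\<close> gives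
  \<open>b(d) = \<beta> (d\<^sub>2\<^sub>2 - d\<^sub>1\<^sub>1)\<close>; for a scalar \<open>d = s I\<close> one has \<open>b(d\<^sup>n) = n s\<^sup>n\<^sup>-\<^sup>1 b(d)\<close>,
  and \<open>d\<^sup>p = d\<close> together with \<open>p = 0\<close> in the field gives \<open>b(d) = 0\<close>. Hence \<open>\<phi>\<close> agrees with
  conjugation by \<open>(a \<beta>; 0 1)\<close> on \<open>D \<union> {unip}\<close>, which generates \<open>H\<close>.\<close>

lemma (in group) hom_eq_on_generate:
  assumes "f \<in> hom G H" "g \<in> hom G H" "group H" "S \<subseteq> carrier G"
    and "\<And>s. s \<in> S \<Longrightarrow> f s = g s" and "x \<in> generate G S"
  shows "f x = g x"
  using assms(6)
proof (induction rule: generate.induct)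
  case one
  show ?case
    using assms(1-3) by (simp add: hom_one)
next
  case (inv h)
  interpret f: group_hom G H f
    using assms(1,3) by (simp add: group_hom_def group_hom_axioms_def)
  interpret g: group_hom G H g
    using assms(2,3) by (simp add: group_hom_def group_hom_axioms_def)
  show ?case
    using inv assms(4,5) by auto
next
  case (eng h1 h2)
  then show ?case
    using assms(1,2,4) generate_in_carrier[OF assms(4)] by (simp add: hom_mult)
qed (use assms(5) in simp)

lemma (in group) conjugation_hom:
  assumes "a \<in> carrier G"
  shows "(\<lambda>x. a \<otimes> x \<otimes> inv a) \<in> hom G G"
proof (rule homI)
  have cancel: "inv a \<otimes> (a \<otimes> z) = z" if "z \<in> carrier G" for z
    using assms that by (simp add: m_assoc[symmetric])
  fix x y
  assume "x \<in> carrier G" "y \<in> carrier G"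
  with assms show "a \<otimes> (x \<otimes> y) \<otimes> inv a = a \<otimes> x \<otimes> inv a \<otimes> (a \<otimes> y \<otimes> inv a)"
    by (simp add: m_assoc cancel)
qed (use assms in simp)

lemma finite_field_power_card_eq_self:
  fixes x :: "'k::{field,finite}"
  shows "x ^ CARD('k) = x"
proof (cases "x = 0")
  case False
  let ?S = "UNIV - {0::'k}"
  have "bij_betw ((*) x) ?S ?S"
    using False by (intro bij_betwI[where g = "\<lambda>y. y / x"]) auto
  then have "prod ((*) x) ?S = prod id ?S"
    using prod.reindex_bij_betw[of "(*) x" ?S ?S id] by simp
  moreover have "prod ((*) x) ?S = x ^ card ?S * prod id ?S"
    by (simp add: prod.distrib)
  moreover have "card ?S = CARD('k) - 1"
    by (simp add: card_Diff_singleton)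
  ultimately have "x ^ (CARD('k) - 1) = 1"
    by simp
  then show ?thesis
    using power_minus_mult[of "CARD('k)" x] by simp
qed simp

lemma of_nat_card_eq_0: "of_nat CARD('k) = (0::'k::{field,finite})"
  by (simp add: of_nat_eq_0_iff_char_dvd CHAR_dvd_CARD)

definition mat2 :: "'k::field \<Rightarrow> 'k \<Rightarrow> 'k \<Rightarrow> 'k \<Rightarrow> 'k^2^2" where
  "mat2 a b c d = (\<chi> i j. if i = 1 then (if j = 1 then a else b) else (if j = 1 then c else d))"

lemma mat2_nth [simp]:
  "mat2 a b c d $ 1 $ 1 = a" "mat2 a b c d $ 1 $ 2 = b"
  "mat2 a b c d $ 2 $ 1 = c" "mat2 a b c d $ 2 $ 2 = d"
  by (simp_all add: mat2_def)

lemma matrix_matrix_mult_nth_2 [simp]: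
  "((A::'k::field^2^2) ** B) $ i $ j = A$i$1 * B$1$j + A$i$2 * B$2$j"
  by (simp add: matrix_matrix_mult_def sum_2)

lemma mat_eq_iff_2:
  "(A::'k::field^2^2) = B \<longleftrightarrow> A$1$1 = B$1$1 \<and> A$1$2 = B$1$2 \<and> A$2$1 = B$2$1 \<and> A$2$2 = B$2$2"
  by (auto simp: vec_eq_iff forall_2)

lemma mat1_nth_2 [simp]:
  "(mat 1 :: 'k::field^2^2) $ 1 $ 1 = 1" "(mat 1 :: 'k::field^2^2) $ 1 $ 2 = 0"
  "(mat 1 :: 'k::field^2^2) $ 2 $ 1 = 0" "(mat 1 :: 'k::field^2^2) $ 2 $ 2 = 1"
  by (simp_all add: mat_def)

lemma unip_nth [simp]:
  "(unip :: 'k::field^2^2) $ 1 $ 1 = 1" "(unip :: 'k::field^2^2) $ 1 $ 2 = 1"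
  "(unip :: 'k::field^2^2) $ 2 $ 1 = 0" "(unip :: 'k::field^2^2) $ 2 $ 2 = 1"
  by (simp_all add: unip_def)

lemma GL2_simps [simp]:
  "carrier GL2 = {A. invertible A}" "x \<otimes>\<^bsub>GL2\<^esub> y = x ** y" "\<one>\<^bsub>GL2\<^esub> = mat 1"
  by (simp_all add: GL2_def)

lemma group_GL2: "group (GL2 :: ('k::field^2^2) monoid)"
proof (rule groupI)
  fix A :: "'k^2^2"
  assume "A \<in> carrier GL2"
  then show "\<exists>B\<in>carrier GL2. B \<otimes>\<^bsub>GL2\<^esub> A = \<one>\<^bsub>GL2\<^esub>"
    by (auto simp: invertible_def)
next
  show "\<one>\<^bsub>GL2\<^esub> \<in> carrier (GL2 :: ('k^2^2) monoid)"
    by (auto simp: invertible_def intro: exI[of _ "mat 1"])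
qed (auto simp: invertible_mult matrix_mul_assoc)

lemma inv_GL2_eqI:
  assumes "(A::'k::field^2^2) ** B = mat 1" "B ** A = mat 1"
  shows "inv\<^bsub>GL2\<^esub> A = B"
proof -
  interpret group "GL2::('k^2^2) monoid" by (rule group_GL2)
  have "A \<in> carrier GL2" "B \<in> carrier GL2"
    using assms by (auto simp: invertible_def)
  then show ?thesis
    using inv_equality[of B A] assms by simp
qed

lemma upper_triangular_in_GL2:
  assumes "a \<noteq> 0" "c \<noteq> 0"
  shows "mat2 a b 0 c \<in> carrier GL2"
    and "inv\<^bsub>GL2\<^esub> (mat2 a b 0 c) = mat2 (1/a) (- b / (a * c)) 0 (1/c)"
proof -
  have "mat2 a b 0 c ** mat2 (1/a) (- b / (a * c)) 0 (1/c) = mat 1"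
    and "mat2 (1/a) (- b / (a * c)) 0 (1/c) ** mat2 a b 0 c = mat 1"
    using assms by (simp_all add: mat_eq_iff_2 field_simps)
  then show "mat2 a b 0 c \<in> carrier GL2"
    and "inv\<^bsub>GL2\<^esub> (mat2 a b 0 c) = mat2 (1/a) (- b / (a * c)) 0 (1/c)"
    by (auto simp: invertible_def intro: inv_GL2_eqI)
qed

lemma Ugrp_unitriangular:
  assumes "u \<in> (Ugrp :: ('k::field^2^2) set)"
  shows "u$1$1 = 1 \<and> u$2$1 = 0 \<and> u$2$2 = 1"
  using assms unfolding Ugrp_def
proof (induction rule: generate.induct)
  case (inv h)
  have "inv\<^bsub>GL2\<^esub> (unip::'k^2^2) = mat2 1 (-1) 0 1"
    by (rule inv_GL2_eqI) (simp_all add: mat_eq_iff_2)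
  with inv show ?case by simp
qed auto

lemma DiagD: "d \<in> Diag \<Longrightarrow> d$1$2 = 0 \<and> d$2$1 = 0 \<and> d$1$1 \<noteq> 0 \<and> d$2$2 \<noteq> 0"
  by (simp add: Diag_def)

lemma one_in_Ugrp: "mat 1 \<in> Ugrp"
  using generate.one[of GL2 "{unip}"] by (simp add: Ugrp_def)

lemma unip_in_Ugrp: "unip \<in> Ugrp"
  by (simp add: Ugrp_def generate.incl)

lemma same_Ugrp_coset_imp_same_diagonal:
  assumes "Ugrp #>\<^bsub>GL2\<^esub> x = Ugrp #>\<^bsub>GL2\<^esub> y" and "(x::'k::field^2^2) $ 2 $ 1 = 0"
  shows "y$1$1 = x$1$1 \<and> y$2$1 = 0 \<and> y$2$2 = x$2$2"
proof -
  have "y \<in> Ugrp #>\<^bsub>GL2\<^esub> y"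
    using one_in_Ugrp by (force simp: r_coset_def)
  then obtain u where "u \<in> Ugrp" "y = u ** x"
    using assms(1) by (auto simp: r_coset_def)
  then show ?thesis
    using Ugrp_unitriangular[of u] assms(2) by simp
qed

lemma twisted_derivation_vanishes_at_scalar:
  fixes D :: "('k::{field,finite}^2^2) set" and b :: "'k^2^2 \<Rightarrow> 'k"
  assumes D_diag: "D \<subseteq> Diag"
    and D_mult: "\<And>d e. d \<in> D \<Longrightarrow> e \<in> D \<Longrightarrow> d ** e \<in> D"
    and b_mult: "\<And>d e. d \<in> D \<Longrightarrow> e \<in> D \<Longrightarrow> b (d ** e) = d$1$1 * b e + b d * e$2$2"
    and d: "d \<in> D" "d$1$1 = d$2$2"
  shows "b d = 0"
proof -
  define s where "s = d$1$1"
  have d_scalar: "d$1$1 = s" "d$2$2 = s" "d$1$2 = 0" "d$2$1 = 0"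
    using d DiagD[OF subsetD[OF D_diag d(1)]] by (auto simp: s_def)
  have powers: "\<exists>e\<in>D. e$1$1 = s^Suc n \<and> e$2$2 = s^Suc n \<and> b e = of_nat (Suc n) * s^n * b d" for n
  proof (induction n)
    case 0
    show ?case
      using d d_scalar by auto
  next
    case (Suc n)
    then obtain e where "e \<in> D" "e$1$1 = s^Suc n" "e$2$2 = s^Suc n"
      "b e = of_nat (Suc n) * s^n * b d"
      by blast
    then show ?case
      using D_mult[OF _ d(1)] b_mult[OF _ d(1)] d_scalar
      by (intro bexI[of _ "e ** d"]) (auto simp: algebra_simps)
  qed
  obtain e where "e \<in> D" "e$1$1 = s^CARD('k)" "e$2$2 = s^CARD('k)"
    "b e = of_nat CARD('k) * s^(CARD('k) - 1) * b d"
    using powers[of "CARD('k) - 1"] by auto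
  moreover from this have "e = d"
    using d_scalar DiagD[OF subsetD[OF D_diag]] by (auto simp: mat_eq_iff_2 finite_field_power_card_eq_self)
  ultimately show ?thesis
    by (simp add: of_nat_card_eq_0)
qed

text \<open>Equivalently: the crossed homomorphism \<open>d \<mapsto> b d / d\<^sub>2\<^sub>2\<close> for the character
  \<open>d \<mapsto> d\<^sub>1\<^sub>1 / d\<^sub>2\<^sub>2\<close> of \<open>D\<close> is a coboundary.\<close>

lemma diagonal_twisted_derivation_is_inner:
  fixes D :: "('k::{field,finite}^2^2) set" and b :: "'k^2^2 \<Rightarrow> 'k"
  assumes D_diag: "D \<subseteq> Diag"
    and D_mult: "\<And>d e. d \<in> D \<Longrightarrow> e \<in> D \<Longrightarrow> d ** e \<in> D"
    and b_mult: "\<And>d e. d \<in> D \<Longrightarrow> e \<in> D \<Longrightarrow> b (d ** e) = d$1$1 * b e + b d * e$2$2"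
  shows "\<exists>\<beta>. \<forall>d\<in>D. b d = \<beta> * (d$2$2 - d$1$1)"
proof (cases "\<exists>d\<^sub>0\<in>D. d\<^sub>0$1$1 \<noteq> d\<^sub>0$2$2")
  case True
  then obtain d\<^sub>0 where d\<^sub>0: "d\<^sub>0 \<in> D" "d\<^sub>0$1$1 \<noteq> d\<^sub>0$2$2"
    by blast
  have "b d = b d\<^sub>0 / (d\<^sub>0$2$2 - d\<^sub>0$1$1) * (d$2$2 - d$1$1)" if "d \<in> D" for d
  proof -
    have "d\<^sub>0 ** d = d ** d\<^sub>0"
      using DiagD[OF subsetD[OF D_diag d\<^sub>0(1)]] DiagD[OF subsetD[OF D_diag that]]
      by (simp add: mat_eq_iff_2 mult.commute)
    then have "b d * (d\<^sub>0$2$2 - d\<^sub>0$1$1) = b d\<^sub>0 * (d$2$2 - d$1$1)"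
      using b_mult[OF d\<^sub>0(1) that] b_mult[OF that d\<^sub>0(1)] by (simp add: algebra_simps)
    then show ?thesis
      using d\<^sub>0(2) by (simp add: field_simps)
  qed
  then show ?thesis
    by blast
next
  case False
  then show ?thesis
    using twisted_derivation_vanishes_at_scalar[OF assms] by auto
qed

lemma subset_DU: "D \<subseteq> DU D"
  unfolding DU_def using one_in_Ugrp by (blast intro: matrix_mul_rid[symmetric])

lemma Ugrp_subset_DU: "mat 1 \<in> D \<Longrightarrow> Ugrp \<subseteq> DU D"
  unfolding DU_def by (blast intro: matrix_mul_lid[symmetric])

lemma DU_subset_generate:
  fixes D :: "('k::field^2^2) set"
  shows "DU D \<subseteq> generate GL2 (D \<union> {unip})"
proof
  interpret group "GL2::('k::field^2^2) monoid" by (rule group_GL2)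
  fix x :: "'k^2^2"
  assume "x \<in> DU D"
  then obtain d u where "x = d ** u" "d \<in> D" "u \<in> Ugrp"
    unfolding DU_def by blast
  moreover have "Ugrp \<subseteq> generate GL2 (D \<union> {unip})"
    unfolding Ugrp_def by (rule mono_generate) blast
  moreover have "d \<in> generate GL2 (D \<union> {unip})"
    using \<open>d \<in> D\<close> by (blast intro: generate.incl)
  ultimately show "x \<in> generate GL2 (D \<union> {unip})"
    using generate.eng[of d GL2 "D \<union> {unip}" u] by auto
qed

locale Ugrp_coset_preserving_aut =
  fixes D :: "('k::{field,finite}^2^2) set" and \<phi> :: "'k^2^2 \<Rightarrow> 'k^2^2"
  assumes D_subgroup: "subgroup D GL2" and D_Diag: "D \<subseteq> Diag"
    and DU_subgroup: "subgroup (DU D) GL2"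
    and \<phi>_iso: "\<phi> \<in> iso (GL2\<lparr>carrier := DU D\<rparr>) (GL2\<lparr>carrier := DU D\<rparr>)"
    and \<phi>_coset: "\<And>x. x \<in> DU D \<Longrightarrow> Ugrp #>\<^bsub>GL2\<^esub> x = Ugrp #>\<^bsub>GL2\<^esub> \<phi> x"
begin

abbreviation H :: "('k^2^2) monoid" where
  "H \<equiv> GL2\<lparr>carrier := DU D\<rparr>"

lemma H_group: "group H"
  using group.subgroup_imp_group[OF group_GL2 DU_subgroup] .

lemma DU_invertible: "DU D \<subseteq> carrier GL2"
  using DU_subgroup subgroup.subset by blast

lemma \<phi>_hom: "\<phi> \<in> hom H GL2"
  using \<phi>_iso DU_invertible by (auto simp: iso_def hom_def)

lemma \<phi>_mult: "x \<in> DU D \<Longrightarrow> y \<in> DU D \<Longrightarrow> \<phi> (x ** y) = \<phi> x ** \<phi> y"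
  using hom_mult[OF \<phi>_hom] by simp

lemma generators_subset_DU: "D \<union> {unip} \<subseteq> DU D"
  using subset_DU Ugrp_subset_DU unip_in_Ugrp subgroup.one_closed[OF D_subgroup] by auto

lemma \<phi>_unip: "\<exists>a. a \<noteq> 0 \<and> \<phi> unip = mat2 1 a 0 1"
proof -
  have unip_DU: "unip \<in> DU D" and one_DU: "mat 1 \<in> DU D"
    using generators_subset_DU subgroup.one_closed[OF DU_subgroup] by auto
  have diag: "\<phi> unip $1$1 = 1 \<and> \<phi> unip $2$1 = 0 \<and> \<phi> unip $2$2 = 1"
    using same_Ugrp_coset_imp_same_diagonal[OF \<phi>_coset[OF unip_DU]] by simp
  have inj: "inj_on \<phi> (DU D)"
    using \<phi>_iso by (simp add: iso_def bij_betw_def)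
  have "\<phi> unip \<noteq> \<phi> (mat 1)"
  proof
    assume "\<phi> unip = \<phi> (mat 1)"
    then have "unip = (mat 1 :: 'k^2^2)"
      by (rule inj_onD[OF inj _ unip_DU one_DU])
    then show False
      by (simp add: mat_eq_iff_2)
  qed
  moreover have "\<phi> (mat 1) = mat 1"
    using hom_one[OF \<phi>_hom H_group group_GL2] by simp
  ultimately have "\<phi> unip $1$2 \<noteq> 0"
    using diag by (auto simp: mat_eq_iff_2)
  with diag show ?thesis
    by (auto simp: mat_eq_iff_2)
qed

lemma \<phi>_Diag_diagonal:
  assumes "d \<in> D"
  shows "\<phi> d $1$1 = d$1$1 \<and> \<phi> d $2$1 = 0 \<and> \<phi> d $2$2 = d$2$2"
  using same_Ugrp_coset_imp_same_diagonal[OF \<phi>_coset] DiagD[OF subsetD[OF D_Diag assms]]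
    subset_DU assms by blast

lemma \<phi>_Diag_off_diagonal: "\<exists>\<beta>. \<forall>d\<in>D. \<phi> d $1$2 = \<beta> * (d$2$2 - d$1$1)"
proof (rule diagonal_twisted_derivation_is_inner[OF D_Diag])
  show "d ** e \<in> D" if "d \<in> D" "e \<in> D" for d e
    using subgroup.m_closed[OF D_subgroup] that by simp
  show "\<phi> (d ** e) $1$2 = d$1$1 * \<phi> e $1$2 + \<phi> d $1$2 * e$2$2" if "d \<in> D" "e \<in> D" for d e
    using \<phi>_mult[of d e] subsetD[OF subset_DU[of D]] that \<phi>_Diag_diagonal[of d] \<phi>_Diag_diagonal[of e]
    by simp
qed

lemma eq_conjugation_if_eq_on_generators:
  assumes "A \<in> carrier GL2" and "\<And>x. x \<in> D \<union> {unip} \<Longrightarrow> \<phi> x = A ** x ** inv\<^bsub>GL2\<^esub> A"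
    and "x \<in> DU D"
  shows "\<phi> x = A ** x ** inv\<^bsub>GL2\<^esub> A"
proof (rule group.hom_eq_on_generate[OF H_group \<phi>_hom _ group_GL2])
  show "(\<lambda>x. A ** x ** inv\<^bsub>GL2\<^esub> A) \<in> hom H GL2"
    using group.conjugation_hom[OF group_GL2 assms(1)] DU_invertible by (auto simp: hom_def)
  show "D \<union> {unip} \<subseteq> carrier H"
    using generators_subset_DU by simp
  show "x \<in> generate H (D \<union> {unip})"
    unfolding group.generate_consistent[OF group_GL2 generators_subset_DU DU_subgroup]
    using DU_subset_generate assms(3) ..
qed (rule assms(2))

end

theorem proposition3p4:
  fixes p :: nat and D :: "('k::{field,finite}^2^2) set"
    and \<phi> :: "'k^2^2 \<Rightarrow> 'k^2^2"
  assumes "Factorial_Ring.prime p" and "CARD('k) = p"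
    and "subgroup D GL2" and "D \<subseteq> Diag"
    and "subgroup (DU D) GL2"
    and "p dvd card (DU D)"
    and "\<phi> \<in> iso (GL2\<lparr>carrier := DU D\<rparr>) (GL2\<lparr>carrier := DU D\<rparr>)"
    and "\<And>x. x \<in> DU D \<Longrightarrow> Ugrp #>\<^bsub>GL2\<^esub> x = Ugrp #>\<^bsub>GL2\<^esub> (\<phi> x)"
  shows "\<exists>A \<in> Borel. \<forall>x \<in> DU D. \<phi> x = A ** x ** inv\<^bsub>GL2\<^esub> A"
proof -
  interpret Ugrp_coset_preserving_aut D \<phi>
    by (rule Ugrp_coset_preserving_aut.intro) (fact assms)+
  obtain a where a: "a \<noteq> 0" "\<phi> unip = mat2 1 a 0 1"
    using \<phi>_unip by blast
  obtain \<beta> where \<beta>: "\<forall>d\<in>D. \<phi> d $1$2 = \<beta> * (d$2$2 - d$1$1)"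
    using \<phi>_Diag_off_diagonal by blast
  define A where "A = mat2 a \<beta> 0 1"
  have A_GL2: "A \<in> carrier GL2" and A_inv: "inv\<^bsub>GL2\<^esub> A = mat2 (1/a) (- \<beta>/a) 0 1"
    using upper_triangular_in_GL2[OF a(1), of 1 \<beta>] by (simp_all add: A_def)
  have "\<phi> x = A ** x ** inv\<^bsub>GL2\<^esub> A" if "x \<in> D \<union> {unip}" for x
  proof (cases "x = unip")
    case True
    show ?thesis
      unfolding True A_inv using a by (simp add: A_def mat_eq_iff_2 field_simps)
  next
    case False
    with that have "x \<in> D"
      by blast
    with DiagD[OF subsetD[OF D_Diag this]] show ?thesis
      unfolding A_inv using a(1) \<beta> \<phi>_Diag_diagonal by (simp add: A_def mat_eq_iff_2 field_simps)
  qed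
  moreover have "A \<in> Borel"
    using a(1) by (simp add: A_def Borel_def)
  ultimately show ?thesis
    using eq_conjugation_if_eq_on_generators[OF A_GL2] by blast
qed

end
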